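(* Let $\nu$ be a partition with $\nu_1\le n$, and let $\nu'$ be its conjugate partition. Then $\nu$ is $n$-colorless if and only if, modulo $n$, the set of integers $\{\nu'_m-m\}_{m=1}^n$ coincides with $\{1,2,\dots,n\}$.
   Context: Here $n\ge3$ is fixed. Let $c_1,\dots,c_{n-1}$ be free generators of a free $\mathbb Z$-module, put $c_0=-(c_1+\dots+c_{n-1})$, and extend the indices $n$-periodically to $\mathbb Z$. For a partition $\gamma$ let $Y(\gamma)=\{(x,y)\in\mathbb Z_{\ge1}^2:\gamma_x\ge y\}$. The partition $\gamma$ is called $n$-colorless if $\sum_{(x,y)\in Y(\gamma)}c_{x-y}=0$; equivalently, for each residue class $i$ mod $n$, the number of boxes $(x,y)\in Y(\gamma)$ with $x-y\equiv i$ is the same. The conjugate partition is given by $\nu'_m=|\{x:\nu_x\ge m\}|$. *)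

theory Defs
  imports Main
begin

definition is_partition :: "nat list \<Rightarrow> bool" where
  "is_partition p \<longleftrightarrow> sorted_wrt (\<ge>) p \<and> 0 \<notin> set p"

definition part :: "nat list \<Rightarrow> nat \<Rightarrow> nat" where
  "part p x = (if 1 \<le> x \<and> x \<le> length p then p ! (x - 1) else 0)"

definition young :: "nat list \<Rightarrow> (nat \<times> nat) set" where
  "young p = {(x, y). 1 \<le> x \<and> 1 \<le> y \<and> y \<le> part p x}"

definition colorless :: "nat \<Rightarrow> nat list \<Rightarrow> bool" where
  "colorless n p \<longleftrightarrow>
     (\<forall>i j :: int. card {(x, y) \<in> young p. (int x - int y) mod int n = i mod int n}
                = card {(x, y) \<in> young p. (int x - int y) mod int n = j mod int n})"

definition conjp :: "nat list \<Rightarrow> nat \<Rightarrow> nat" where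
  "conjp p m = card {x. 1 \<le> x \<and> m \<le> part p x}"

end

theory Submission
  imports Defs
begin

text \<open>Let \<open>N i\<close> be the number of boxes of content \<open>\<equiv> i (mod n)\<close>. Since \<open>\<nu>\<^sub>1 \<le> n\<close>, the diagram
  consists of the columns \<open>m = 1..n\<close> of heights \<open>\<nu>'\<^sub>m\<close>, and column \<open>m\<close> carries the consecutive
  contents \<open>1 - m, \<dots>, \<nu>'\<^sub>m - m\<close>. Hence its contribution to \<open>N i - N (i + 1)\<close> telescopes to
  \<open>[\<nu>'\<^sub>m - m \<equiv> i] - [-m \<equiv> i]\<close>, and as \<open>-1, \<dots>, -n\<close> is a complete residue system,
  \<open>N i - N (i + 1) = #{m. \<nu>'\<^sub>m - m \<equiv> i} - 1\<close>. So \<open>N\<close> is constant exactly when every residue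
  is hit by exactly one \<open>\<nu>'\<^sub>m - m\<close>.\<close>

lemma part_antimono:
  assumes "is_partition p" "1 \<le> x" "x \<le> x'"
  shows "part p x' \<le> part p x"
proof (cases "x' \<le> length p \<and> x < x'")
  case True
  have "sorted_wrt (\<ge>) p" using assms(1) by (simp add: is_partition_def)
  moreover have "x - 1 < x' - 1" "x' - 1 < length p" using True assms(2) by auto
  ultimately have "p ! (x' - 1) \<le> p ! (x - 1)" by (simp add: sorted_wrt_iff_nth_less)
  then show ?thesis using True assms(2) by (simp add: part_def)
next
  case False
  then show ?thesis using assms(3) by (auto simp: part_def)
qed

lemma part_le_first_part:
  assumes "is_partition p"
  shows "part p x \<le> part p 1"
  using part_antimono[OF assms, of 1 x] by (cases x) (auto simp: part_def)

lemma column_eq_atLeastAtMost_conjp: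
  assumes "is_partition p" "1 \<le> y"
  shows "{x. 1 \<le> x \<and> y \<le> part p x} = {1..conjp p y}"
proof -
  define S where "S = {x. 1 \<le> x \<and> y \<le> part p x}"
  have "S \<subseteq> {1..length p}"
    using assms(2) by (auto simp: S_def part_def split: if_splits)
  then have "finite S" by (rule finite_subset) simp
  have down_closed: "x' \<in> S" if "x \<in> S" "1 \<le> x'" "x' \<le> x" for x x'
    using that part_antimono[OF assms(1) that(2,3)] by (auto simp: S_def)
  have "S = {1..card S}"
  proof (cases "S = {}")
    case False
    have "S = {1..Max S}"
      using down_closed[OF Max_in[OF \<open>finite S\<close> False]] \<open>finite S\<close> by (auto simp: S_def)
    then show ?thesis by (metis card_atLeastAtMost diff_Suc_1)
  qed simp
  then show ?thesis by (simp add: S_def conjp_def)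
qed

lemma mem_young_iff_column:
  assumes "is_partition p" "part p 1 \<le> n"
  shows "(x, y) \<in> young p \<longleftrightarrow> y \<in> {1..n} \<and> x \<in> {1..conjp p y}"
proof -
  have "(x, y) \<in> young p \<longleftrightarrow> 1 \<le> y \<and> 1 \<le> x \<and> y \<le> part p x"
    by (auto simp: young_def)
  also have "\<dots> \<longleftrightarrow> y \<in> {1..n} \<and> x \<in> {x. 1 \<le> x \<and> y \<le> part p x}"
    using part_le_first_part[OF assms(1), of x] assms(2) by auto
  also have "\<dots> \<longleftrightarrow> y \<in> {1..n} \<and> x \<in> {1..conjp p y}"
    using column_eq_atLeastAtMost_conjp[OF assms(1), of y] by (metis atLeastAtMost_iff)
  finally show ?thesis .
qed

lemma card_young_filter:
  assumes "is_partition p" "part p 1 \<le> n"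
  shows "card {(x, y) \<in> young p. Q x y} = (\<Sum>y\<in>{1..n}. card {x\<in>{1..conjp p y}. Q x y})"
proof -
  have "{(x, y) \<in> young p. Q x y} = prod.swap ` (SIGMA y:{1..n}. {x\<in>{1..conjp p y}. Q x y})"
    by (auto simp: mem_young_iff_column[OF assms] image_iff)
  then have "card {(x, y) \<in> young p. Q x y} = card (SIGMA y:{1..n}. {x\<in>{1..conjp p y}. Q x y})"
    by (simp add: card_image)
  also have "\<dots> = (\<Sum>y\<in>{1..n}. card {x\<in>{1..conjp p y}. Q x y})"
    by (rule card_SigmaI) auto
  finally show ?thesis .
qed

lemma card_filter_atLeastAtMost_Suc:
  "card {x\<in>{1..Suc c}. Q x} = card {x\<in>{1..c}. Q x} + of_bool (Q (Suc c))"
proof -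
  have "{x\<in>{1..Suc c}. Q x} = (if Q (Suc c) then insert (Suc c) {x\<in>{1..c}. Q x} else {x\<in>{1..c}. Q x})"
    by (auto simp: le_Suc_eq)
  then show ?thesis by simp
qed

lemma column_residue_count_diff:
  fixes b i :: int
  shows "int (card {x\<in>{1..c}. (int x - b) mod m = i mod m})
       - int (card {x\<in>{1..c}. (int x - b) mod m = (i + 1) mod m})
       = of_bool ((int c - b) mod m = i mod m) - of_bool ((- b) mod m = i mod m)"
proof (induction c)
  case (Suc c)
  have "(int (Suc c) - b) mod m = (i + 1) mod m \<longleftrightarrow> (int c - b) mod m = i mod m"
    by (simp add: mod_eq_dvd_iff algebra_simps)
  with Suc.IH show ?case
    by (simp only: card_filter_atLeastAtMost_Suc of_nat_add) simp
qed simp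

lemma card_neg_residue_class:
  assumes "n > 0"
  shows "card {y\<in>{1..n}. (- int y) mod int n = i mod int n} = 1"
proof -
  have neg_mod: "(- int y) mod int n = int n - int y" if "y \<in> {1..n}" for y
  proof -
    have "(- int y) mod int n = (int n - int y) mod int n" by (simp add: mod_diff_left_eq[symmetric])
    also have "\<dots> = int n - int y" using that by (intro mod_pos_pos_trivial) auto
    finally show ?thesis .
  qed
  have "0 \<le> i mod int n" "i mod int n < int n" using assms by auto
  then have "{y\<in>{1..n}. (- int y) mod int n = i mod int n} = {n - nat (i mod int n)}"
    using neg_mod by force
  then show ?thesis by simp
qed

lemma young_residue_count_diff:
  assumes "is_partition p" "part p 1 \<le> n" "n > 0"
  defines "N \<equiv> \<lambda>i. int (card {(x, y) \<in> young p. (int x - int y) mod int n = i mod int n})"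
  shows "N i - N (i + 1) = int (card {m\<in>{1..n}. (int (conjp p m) - int m) mod int n = i mod int n}) - 1"
proof -
  have N_columns: "N j = (\<Sum>y\<in>{1..n}. int (card {x\<in>{1..conjp p y}. (int x - int y) mod int n = j mod int n}))" for j
    unfolding N_def card_young_filter[OF assms(1,2)] by simp
  have "N i - N (i + 1) = (\<Sum>y\<in>{1..n}. of_bool ((int (conjp p y) - int y) mod int n = i mod int n)
       - of_bool ((- int y) mod int n = i mod int n))"
    unfolding N_columns sum_subtractf[symmetric] by (simp only: column_residue_count_diff)
  also have "\<dots> = int (card {m\<in>{1..n}. (int (conjp p m) - int m) mod int n = i mod int n})
       - int (card {y\<in>{1..n}. (- int y) mod int n = i mod int n})"
    by (simp add: sum_subtractf Int_def)
  finally show ?thesis using card_neg_residue_class[OF assms(3)] by simp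
qed

lemma fibres_card_one_iff_image_eq:
  assumes "finite A" "g ` A \<subseteq> B" "card A = card B"
  shows "(\<forall>b\<in>B. card {a\<in>A. g a = b} = 1) \<longleftrightarrow> g ` A = B"
proof
  assume one: "\<forall>b\<in>B. card {a\<in>A. g a = b} = 1"
  have "b \<in> g ` A" if "b \<in> B" for b
  proof -
    have "card {a\<in>A. g a = b} \<noteq> 0" using one that by simp
    then show ?thesis by (metis (mono_tags, lifting) card.empty empty_Collect_eq image_eqI)
  qed
  then show "g ` A = B" using assms(2) by blast
next
  assume image: "g ` A = B"
  then have inj: "inj_on g A" using assms(1,3) by (simp add: inj_on_iff_eq_card)
  show "\<forall>b\<in>B. card {a\<in>A. g a = b} = 1"
  proof
    fix b assume "b \<in> B"
    then obtain a where "a \<in> A" "g a = b" using image by blast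
    then have "{a'\<in>A. g a' = b} = {a}" using inj_onD[OF inj] by blast
    then show "card {a\<in>A. g a = b} = 1" by simp
  qed
qed

lemma constant_iff_shift_invariant:
  fixes N :: "int \<Rightarrow> 'a"
  shows "(\<forall>i j. N i = N j) \<longleftrightarrow> (\<forall>i. N i = N (i + 1))"
proof
  assume shift: "\<forall>i. N i = N (i + 1)"
  have "N i = N 0" for i
  proof (induction i rule: int_induct[where k = 0])
    case (step1 i)
    then show ?case using shift by metis
  next
    case (step2 i)
    then show ?case using shift[rule_format, of "i - 1"] by simp
  qed simp
  then show "\<forall>i j. N i = N j" by metis
qed simp

lemma all_mod_iff_all_atLeastLessThan:
  fixes m :: int
  assumes "m > 0"
  shows "(\<forall>i. P (i mod m)) \<longleftrightarrow> (\<forall>r\<in>{0..<m}. P r)"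
proof
  assume "\<forall>i. P (i mod m)"
  then show "\<forall>r\<in>{0..<m}. P r" by (metis atLeastLessThan_iff mod_pos_pos_trivial)
qed (use assms in simp)

lemma image_mod_atLeastAtMost:
  assumes "n > 0"
  shows "(\<lambda>i. i mod int n) ` {1..int n} = {0..<int n}"
proof -
  have "r \<in> (\<lambda>i. i mod int n) ` {1..int n}" if "r \<in> {0..<int n}" for r
    using that by (cases "r = 0") (auto intro: image_eqI[of _ _ "int n"] image_eqI[of _ _ r])
  then show ?thesis using assms by auto
qed

theorem mainTheorem9:
  fixes n :: nat and \<nu> :: "nat list"
  assumes "n \<ge> 3" and "is_partition \<nu>" and "part \<nu> 1 \<le> n"
  shows "colorless n \<nu> \<longleftrightarrow>
    (\<lambda>m. (int (conjp \<nu> m) - int m) mod int n) ` {1..n}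
      = (\<lambda>i. i mod int n) ` {1..int n}"
proof -
  have "n > 0" using assms(1) by simp
  define N where "N \<equiv> \<lambda>i. int (card {(x, y) \<in> young \<nu>. (int x - int y) mod int n = i mod int n})"
  define g where "g \<equiv> \<lambda>m. (int (conjp \<nu> m) - int m) mod int n"
  have "colorless n \<nu> \<longleftrightarrow> (\<forall>i j. N i = N j)"
    by (simp add: colorless_def N_def)
  also have "\<dots> \<longleftrightarrow> (\<forall>i. N i = N (i + 1))"
    by (rule constant_iff_shift_invariant)
  also have "\<dots> \<longleftrightarrow> (\<forall>i. card {m\<in>{1..n}. g m = i mod int n} = 1)"
  proof -
    have diff: "N i - N (i + 1) = int (card {m\<in>{1..n}. g m = i mod int n}) - 1" for i
      using young_residue_count_diff[OF assms(2,3) \<open>n > 0\<close>] by (simp add: N_def g_def)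
    have "N i = N (i + 1) \<longleftrightarrow> card {m\<in>{1..n}. g m = i mod int n} = 1" for i
      by (simp only: eq_iff_diff_eq_0[of "N i"] diff) simp
    then show ?thesis by blast
  qed
  also have "\<dots> \<longleftrightarrow> (\<forall>r\<in>{0..<int n}. card {m\<in>{1..n}. g m = r} = 1)"
    using \<open>n > 0\<close> by (intro all_mod_iff_all_atLeastLessThan) simp
  also have "\<dots> \<longleftrightarrow> g ` {1..n} = {0..<int n}"
    using \<open>n > 0\<close> by (intro fibres_card_one_iff_image_eq) (auto simp: g_def)
  finally show ?thesis using image_mod_atLeastAtMost[OF \<open>n > 0\<close>] by (simp add: g_def)
qed

end
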